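(* Let $\tau=2\pi P/Q$ and $\beta=\nu/P+Q/2\pmod 1$ ($P,Q,\nu$ integers, $Q\ge1$, $P\ne0$), and let $d$ be the integer part of $(Q+1)/2$. If $P$ and $Q$ are coprime (so that $Q=q$, $P=p$), then the $d\times d$ matrix $\mathbf G^{(d)}=\{G_{jk}\}_{1\le j,k\le d}$ is nonsingular.
   Context: Write $P/Q=p/q$ with $p,q$ coprime. $G_{jk}=\frac1Q\sum_{s=0}^{Q-1}e^{2\pi i s(j-k)/Q}a_{s+1}$ for $1\le j,k\le Q$, with $a_r=e^{-i\pi p(r+\beta-1)^2/q}$, $1\le r\le Q$. *)

theory Defs
  imports Complex_Main "Jordan_Normal_Form.Determinant"
begin

definition red_p :: "int \<Rightarrow> int \<Rightarrow> int" where
  "red_p P Q = fst (quotient_of (of_int P / of_int Q :: rat))"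
definition red_q :: "int \<Rightarrow> int \<Rightarrow> int" where
  "red_q P Q = snd (quotient_of (of_int P / of_int Q :: rat))"

definition beta :: "int \<Rightarrow> int \<Rightarrow> int \<Rightarrow> real" where
  "beta P Q \<nu> = frac (of_int \<nu> / of_int P + of_int Q / 2)"

definition a_coef :: "int \<Rightarrow> int \<Rightarrow> int \<Rightarrow> nat \<Rightarrow> complex" where
  "a_coef P Q \<nu> r = exp (- \<i> * of_real (pi * of_int (red_p P Q)
      * (of_nat r + beta P Q \<nu> - 1)^2 / of_int (red_q P Q)))"

definition G_entry :: "int \<Rightarrow> int \<Rightarrow> int \<Rightarrow> nat \<Rightarrow> nat \<Rightarrow> complex" where
  "G_entry P Q \<nu> j k = (1 / of_int Q) * (\<Sum>s<nat Q.
      exp (2 * pi * \<i> * of_nat s * (of_nat j - of_nat k) / of_int Q) * a_coef P Q \<nu> (s + 1))"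

text \<open>The d x d leading block, 1-based entries shifted to 0-based indices.\<close>
definition G_mat :: "int \<Rightarrow> int \<Rightarrow> int \<Rightarrow> nat \<Rightarrow> complex mat" where
  "G_mat P Q \<nu> d = mat d d (\<lambda>(j, k). G_entry P Q \<nu> (j + 1) (k + 1))"

end

theory Submission
  imports Defs "HOL-Computational_Algebra.Polynomial"
begin

(* Write n = Q and let f be the chirp f(x) = cis(-pi p (x + beta)^2 / n) on the
   integers.  Then G_jk = g(j - k) where g(m) is the m-th discrete Fourier coefficient of f.
   (1) Since p (2 beta + n) is an even integer, f is n-periodic.
   (2) Choose u with p u = -1 (mod n).  Completing the square shows that shifting f by m u
       multiplies it by a constant times the character cis(2 pi x m / n); by periodicity the
       shift does not change the sum over a period, so g(m) = g(0) / c(m u) for an explicit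
       unimodular c.  The quadratic form of c makes g(j - k) = g(0) r_j s_k z_j^k with
       z_j = cis(2 pi u j / n) and r_j, s_k nonzero.
   (3) g(0) is nonzero: by Fourier inversion the g(m) sum to f(0) over a period.
   (4) The nodes z_j, j < n, are distinct since u is a unit mod n, so the leading d x d block
       of G (d <= n) is a diagonally rescaled Vandermonde matrix, hence nonsingular. *)

lemma cis_eq_mod_2pi:
  assumes "a = b + 2 * pi * of_int k"
  shows "cis a = cis b"
  using assms by (simp add: cis_mult[symmetric])

lemma cis_fraction_eq_1_imp_dvd:
  assumes "n > 0" and "cis (2 * pi * of_int a / of_nat n) = 1"
  shows "int n dvd a"
proof -
  have "cos (2 * pi * of_int a / of_nat n) = 1"
    using arg_cong[OF assms(2), of Re] by simp
  then obtain k :: int where "2 * pi * of_int a / of_nat n = of_int k * 2 * pi"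
    by (auto simp: cos_one_2pi_int)
  then have "(of_int a :: real) = of_int (k * int n)"
    using assms(1) by (simp add: field_simps)
  then show ?thesis
    by (simp only: of_int_eq_iff) simp
qed

lemma sum_roots_of_unity:
  assumes "s < n"
  shows "(\<Sum>m<n. cis (2 * pi * of_nat s * of_nat m / of_nat n)) = (if s = 0 then of_nat n else 0)"
proof (cases "s = 0")
  case False
  define x where "x = cis (2 * pi * of_nat s / of_nat n)"
  have powers: "cis (2 * pi * of_nat s * of_nat m / of_nat n) = x ^ m" for m
    by (simp add: x_def DeMoivre mult_ac)
  have "x \<noteq> 1"
  proof
    assume "x = 1"
    then have "int n dvd int s"
      using cis_fraction_eq_1_imp_dvd[of n "int s"] assms by (simp add: x_def)
    with False assms show False
      by (auto dest: dvd_imp_le)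
  qed
  moreover have "x ^ n = 1"
  proof -
    have "x ^ n = cis (2 * pi * of_int (int s))"
      using assms by (simp add: x_def DeMoivre)
    then show ?thesis by simp
  qed
  ultimately show ?thesis
    using False by (simp add: powers sum_gp_strict)
qed simp

lemma sum_shift_periodic:
  fixes f :: "int \<Rightarrow> 'a::cancel_comm_monoid_add"
  assumes periodic: "\<And>x. f (x + int n) = f x"
  shows "(\<Sum>s<n. f (int s + v)) = (\<Sum>s<n. f (int s))"
proof -
  have step: "(\<Sum>s<n. f (int s + (w + 1))) = (\<Sum>s<n. f (int s + w))" for w
  proof -
    have "f w + (\<Sum>s<n. f (int s + (w + 1))) = (\<Sum>s<Suc n. f (int s + w))"
      by (subst sum.lessThan_Suc_shift) (simp add: add_ac)
    also have "\<dots> = (\<Sum>s<n. f (int s + w)) + f w"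
      using periodic[of w] by (simp add: add.commute)
    finally show ?thesis
      by (simp add: add.commute)
  qed
  show ?thesis
  proof (induction v rule: int_induct[where k = 0])
    case (step2 v)
    then show ?case using step[of "v - 1"] by simp
  qed (simp_all add: step)
qed

lemma poly_eq_0_if_many_roots:
  fixes P :: "'a::idom poly"
  assumes "inj_on x {..<d}" and "\<And>j. j < d \<Longrightarrow> poly P (x j) = 0" and "degree P < d"
  shows "P = 0"
proof (rule ccontr)
  assume "P \<noteq> 0"
  have "x ` {..<d} \<subseteq> {y. poly P y = 0}"
    using assms(2) by auto
  then have "card (x ` {..<d}) \<le> card {y. poly P y = 0}"
    by (rule card_mono[OF poly_roots_finite[OF \<open>P \<noteq> 0\<close>]])
  also have "\<dots> \<le> degree P"
    by (rule card_poly_roots_bound[OF \<open>P \<noteq> 0\<close>])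
  finally show False
    using assms(1,3) by (simp add: card_image)
qed

lemma det_scaled_vandermonde_nonzero:
  fixes x c e :: "nat \<Rightarrow> 'a::field"
  assumes nodes: "inj_on x {..<d}"
    and c: "\<And>j. j < d \<Longrightarrow> c j \<noteq> 0" and e: "\<And>k. k < d \<Longrightarrow> e k \<noteq> 0"
  shows "det (mat d d (\<lambda>(j, k). c j * e k * x j ^ k)) \<noteq> 0"
proof
  define M where "M = mat d d (\<lambda>(j, k). c j * e k * x j ^ k)"
  assume "det (mat d d (\<lambda>(j, k). c j * e k * x j ^ k)) = 0"
  then obtain v where v: "v \<in> carrier_vec d" "v \<noteq> 0\<^sub>v d" "M *\<^sub>v v = 0\<^sub>v d"
    using det_0_iff_vec_prod_zero_field[of M d] by (auto simp: M_def)
  define P where "P = (\<Sum>k<d. monom (e k * v $ k) k)"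
  have "poly P (x j) = 0" if j: "j < d" for j
  proof -
    have "0 = (M *\<^sub>v v) $ j"
      using v(3) j by simp
    also have "\<dots> = (\<Sum>k<d. c j * (e k * v $ k * x j ^ k))"
      using j v(1) by (simp add: M_def scalar_prod_def atLeast0LessThan mult_ac)
    also have "\<dots> = c j * poly P (x j)"
      by (simp add: P_def poly_sum poly_monom sum_distrib_left)
    finally show ?thesis
      using c[OF j] by simp
  qed
  moreover have "degree P \<le> d - 1"
    unfolding P_def by (rule degree_sum_le) (auto intro: order.trans[OF degree_monom_le])
  ultimately have "P = 0"
    using poly_eq_0_if_many_roots[OF nodes] by (cases "d = 0") (auto simp: P_def)
  have "v $ k = 0" if "k < d" for k
  proof -
    have "coeff P k = e k * v $ k"
      using that by (simp add: P_def coeff_sum coeff_monom)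
    with \<open>P = 0\<close> e[OF that] show ?thesis by simp
  qed
  then have "v = 0\<^sub>v d"
    using v(1) by (intro eq_vecI) auto
  with v(2) show False by simp
qed

definition fourier_coeff :: "nat \<Rightarrow> (nat \<Rightarrow> complex) \<Rightarrow> int \<Rightarrow> complex" where
  "fourier_coeff n f m =
     (1 / of_nat n) * (\<Sum>s<n. cis (2 * pi * of_nat s * of_int m / of_nat n) * f s)"

lemma sum_fourier_coeff:
  assumes "n > 0"
  shows "(\<Sum>m<n. fourier_coeff n f (int m)) = f 0"
proof -
  have "(\<Sum>m<n. \<Sum>s<n. cis (2 * pi * of_nat s * of_nat m / of_nat n) * f s)
      = (\<Sum>s<n. (\<Sum>m<n. cis (2 * pi * of_nat s * of_nat m / of_nat n)) * f s)"
    by (subst sum.swap) (simp add: sum_distrib_right)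
  also have "\<dots> = (\<Sum>s<n. if s = 0 then of_nat n * f s else 0)"
    by (rule sum.cong) (simp_all add: sum_roots_of_unity)
  also have "\<dots> = of_nat n * f 0"
    using assms by simp
  finally show ?thesis
    using assms by (simp add: fourier_coeff_def sum_divide_distrib[symmetric])
qed

text \<open>The discrete chirp \<open>x \<mapsto> cis (-\<pi> p (x + \<beta>)^2 / n)\<close> on the integers, and the
  factor by which a shift by \<open>y\<close> multiplies it (up to a linear character).\<close>
definition chirp :: "int \<Rightarrow> nat \<Rightarrow> real \<Rightarrow> int \<Rightarrow> complex" where
  "chirp p n \<beta> x = cis (- pi * of_int p * (of_int x + \<beta>)\<^sup>2 / of_nat n)"

definition chirp_shift :: "int \<Rightarrow> nat \<Rightarrow> real \<Rightarrow> int \<Rightarrow> complex" where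
  "chirp_shift p n \<beta> y = cis (- pi * of_int p * (2 * of_int y * \<beta> + (of_int y)\<^sup>2) / of_nat n)"

lemma chirp_add:
  "chirp p n \<beta> (x + y)
     = chirp p n \<beta> x * chirp_shift p n \<beta> y * cis (- 2 * pi * of_int p * of_int x * of_int y / of_nat n)"
  unfolding chirp_def chirp_shift_def cis_mult
  by (rule arg_cong[where f = cis]) (simp add: power2_eq_square divide_inverse algebra_simps)

lemma chirp_shift_add:
  "chirp_shift p n \<beta> (a + b)
     = chirp_shift p n \<beta> a * chirp_shift p n \<beta> b * cis (- 2 * pi * of_int p * of_int a * of_int b / of_nat n)"
  unfolding chirp_shift_def cis_mult
  by (rule arg_cong[where f = cis]) (simp add: power2_eq_square divide_inverse algebra_simps)

lemma chirp_periodic: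
  assumes "n > 0" and even: "of_int p * (2 * \<beta> + of_nat n) = 2 * of_int z"
  shows "chirp p n \<beta> (x + int n) = chirp p n \<beta> x"
proof -
  have "of_int p * ((of_int x + of_nat n + \<beta>)\<^sup>2 - (of_int x + \<beta>)\<^sup>2)
      = of_nat n * (2 * of_int p * of_int x + of_int p * (2 * \<beta> + of_nat n))"
    by (simp add: power2_eq_square algebra_simps)
  also have "\<dots> = of_nat n * (2 * of_int (p * x + z))"
    using even by (simp add: algebra_simps)
  finally have "- pi * of_int p * (of_int x + of_nat n + \<beta>)\<^sup>2 / of_nat n
      = - pi * of_int p * (of_int x + \<beta>)\<^sup>2 / of_nat n + 2 * pi * of_int (- (p * x + z))"
    using assms(1) by (simp add: field_simps)
  from cis_eq_mod_2pi[OF this] show ?thesis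
    unfolding chirp_def by simp
qed

lemma chirp_shift_by_inverse:
  assumes "n > 0" and inverse: "p * u = int n * t - 1"
  shows "chirp p n \<beta> (x + m * u)
     = chirp p n \<beta> x * chirp_shift p n \<beta> (m * u) * cis (2 * pi * of_int x * of_int m / of_nat n)"
proof -
  have pu: "of_int p * of_int u = of_nat n * of_int t - (1::real)"
    using arg_cong[OF inverse, of real_of_int] by simp
  have "- 2 * pi * of_int p * of_int x * of_int (m * u) / of_nat n
      = - 2 * pi * of_int x * of_int m * (of_int p * of_int u) / of_nat n"
    by (simp add: mult_ac)
  also have "\<dots> = - 2 * pi * of_int x * of_int m * (of_nat n * of_int t - 1) / of_nat n"
    by (simp only: pu)
  also have "\<dots> = 2 * pi * of_int x * of_int m / of_nat n + 2 * pi * of_int (- (x * m * t))"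
    using assms(1) by (simp add: field_simps)
  finally have "cis (- 2 * pi * of_int p * of_int x * of_int (m * u) / of_nat n)
      = cis (2 * pi * of_int x * of_int m / of_nat n)"
    by (rule cis_eq_mod_2pi)
  then show ?thesis
    by (simp only: chirp_add)
qed

text \<open>Below, \<open>p (2\<beta> + n) = 2z\<close> makes the chirp \<open>n\<close>-periodic and \<open>p u = n t - 1\<close> makes \<open>u\<close> a
  negative inverse of \<open>p\<close> modulo \<open>n\<close>.\<close>
abbreviation chirp_coeff :: "int \<Rightarrow> nat \<Rightarrow> real \<Rightarrow> int \<Rightarrow> complex" where
  "chirp_coeff p n \<beta> \<equiv> fourier_coeff n (\<lambda>s. chirp p n \<beta> (int s))"

text \<open>Modulating the chirp by the \<open>m\<close>-th character amounts to shifting it by \<open>m u\<close>, which does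
  not change its sum over a period; hence all coefficients are multiples of the \<open>0\<close>-th.\<close>
lemma chirp_coeff_shift:
  assumes "n > 0" and even: "of_int p * (2 * \<beta> + of_nat n) = 2 * of_int z"
    and inverse: "p * u = int n * t - 1"
  shows "chirp_coeff p n \<beta> m * chirp_shift p n \<beta> (m * u) = chirp_coeff p n \<beta> 0"
proof -
  have modulated: "cis (2 * pi * of_nat s * of_int m / of_nat n) * chirp p n \<beta> (int s)
      * chirp_shift p n \<beta> (m * u) = chirp p n \<beta> (int s + m * u)" for s
    using chirp_shift_by_inverse[OF assms(1) inverse, of \<beta> "int s" m] by (simp add: mult_ac)
  have "chirp_coeff p n \<beta> m * chirp_shift p n \<beta> (m * u)
      = (1 / of_nat n) * (\<Sum>s<n. cis (2 * pi * of_nat s * of_int m / of_nat n) * chirp p n \<beta> (int s)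
          * chirp_shift p n \<beta> (m * u))"
    by (simp add: fourier_coeff_def sum_distrib_right mult.assoc)
  also have "\<dots> = (1 / of_nat n) * (\<Sum>s<n. chirp p n \<beta> (int s + m * u))"
    by (simp only: modulated)
  also have "\<dots> = (1 / of_nat n) * (\<Sum>s<n. chirp p n \<beta> (int s))"
    using sum_shift_periodic[of "chirp p n \<beta>" n "m * u"] chirp_periodic[OF assms(1) even] by simp
  also have "\<dots> = chirp_coeff p n \<beta> 0"
    by (simp add: fourier_coeff_def)
  finally show ?thesis .
qed

text \<open>The \<open>0\<close>-th coefficient (a quadratic Gauss sum) does not vanish: otherwise all
  coefficients would vanish, contradicting Fourier inversion at \<open>0\<close>.\<close>
lemma chirp_coeff_0_nonzero:
  assumes "n > 0" and even: "of_int p * (2 * \<beta> + of_nat n) = 2 * of_int z"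
    and inverse: "p * u = int n * t - 1"
  shows "chirp_coeff p n \<beta> 0 \<noteq> 0"
proof
  assume "chirp_coeff p n \<beta> 0 = 0"
  then have "chirp_coeff p n \<beta> m = 0" for m
    using chirp_coeff_shift[OF assms, of m] by (simp add: chirp_shift_def)
  then have "chirp p n \<beta> 0 = 0"
    using sum_fourier_coeff[OF assms(1), of "\<lambda>s. chirp p n \<beta> (int s)"] by simp
  then show False
    by (simp add: chirp_def)
qed

text \<open>Factorization of the Toeplitz entries: \<open>g(j - k) = g(0) r_j s_k z_j^k\<close> with the node
  \<open>z_j = cis (2\<pi> u j / n)\<close>; it comes from the quadratic law of the shift factors.\<close>
lemma chirp_coeff_toeplitz:
  assumes "n > 0" and even: "of_int p * (2 * \<beta> + of_nat n) = 2 * of_int z"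
    and inverse: "p * u = int n * t - 1"
  shows "chirp_coeff p n \<beta> (int j - int k)
    = chirp_coeff p n \<beta> 0 * inverse (chirp_shift p n \<beta> (int j * u))
      * inverse (chirp_shift p n \<beta> (- int k * u)) * cis (2 * pi * of_int u * of_nat j / of_nat n) ^ k"
proof -
  let ?z = "cis (2 * pi * of_int u * of_nat j / of_nat n)"
  have pu: "of_int p * of_int u = of_nat n * of_int t - (1::real)"
    using arg_cong[OF inverse, of real_of_int] by simp
  have "- 2 * pi * of_int p * of_int (int j * u) * of_int (- int k * u) / of_nat n
      = 2 * pi * of_int u * of_nat j * of_nat k * (of_int p * of_int u) / of_nat n"
    by (simp add: mult_ac)
  also have "\<dots> = 2 * pi * of_int u * of_nat j * of_nat k * (of_nat n * of_int t - 1) / of_nat n"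
    by (simp only: pu)
  also have "\<dots> = - (of_nat k * (2 * pi * of_int u * of_nat j / of_nat n))
      + 2 * pi * of_int (u * int j * int k * t)"
    using assms(1) by (simp add: field_simps)
  finally have "cis (- 2 * pi * of_int p * of_int (int j * u) * of_int (- int k * u) / of_nat n)
      = cis (- (of_nat k * (2 * pi * of_int u * of_nat j / of_nat n)))"
    by (rule cis_eq_mod_2pi)
  then have cross: "cis (- 2 * pi * of_int p * of_int (int j * u) * of_int (- int k * u) / of_nat n)
      = inverse (?z ^ k)"
    by (simp add: DeMoivre)
  have shift: "chirp_shift p n \<beta> ((int j - int k) * u)
      = chirp_shift p n \<beta> (int j * u) * chirp_shift p n \<beta> (- int k * u) * inverse (?z ^ k)"
  proof -
    have "(int j - int k) * u = int j * u + - int k * u"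
      by (simp add: algebra_simps)
    then show ?thesis
      by (simp only: chirp_shift_add cross)
  qed
  have solve: "x = y * inverse a * inverse b * c"
    if "x * (a * b * inverse c) = y" "a \<noteq> 0" "b \<noteq> 0" "c \<noteq> 0" for x y a b c :: complex
    using that by (simp add: field_simps)
  show ?thesis
    using chirp_coeff_shift[OF assms, of "int j - int k"] unfolding shift
    by (rule solve) (simp_all add: chirp_shift_def)
qed

lemma inj_on_roots_of_unity:
  assumes "n > 0" and "coprime (int n) u"
  shows "inj_on (\<lambda>j. cis (2 * pi * of_int u * of_nat j / of_nat n)) {..<n}"
proof (rule inj_onI)
  fix a b
  assume a: "a \<in> {..<n}" and b: "b \<in> {..<n}"
    and eq: "cis (2 * pi * of_int u * of_nat a / of_nat n) = cis (2 * pi * of_int u * of_nat b / of_nat n)"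
  have "cis (2 * pi * of_int (u * (int a - int b)) / of_nat n)
      = cis (2 * pi * of_int u * of_nat a / of_nat n) / cis (2 * pi * of_int u * of_nat b / of_nat n)"
    by (simp add: cis_divide diff_divide_distrib algebra_simps)
  then have "int n dvd u * (int a - int b)"
    using eq by (intro cis_fraction_eq_1_imp_dvd[OF assms(1)]) simp
  then have "int a mod int n = int b mod int n"
    using assms(2) by (simp add: coprime_dvd_mult_right_iff mod_eq_dvd_iff)
  then show "a = b"
    using a b by simp
qed

text \<open>The leading \<open>d \<times> d\<close> Toeplitz block of the chirp coefficients is nonsingular for
  \<open>d \<le> n\<close>: it is a rescaled Vandermonde matrix.\<close>
lemma det_chirp_coeff_toeplitz_nonzero:
  assumes "n > 0" and even: "of_int p * (2 * \<beta> + of_nat n) = 2 * of_int z"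
    and inverse: "p * u = int n * t - 1" and "d \<le> n"
  shows "det (mat d d (\<lambda>(j, k). chirp_coeff p n \<beta> (int j - int k))) \<noteq> 0"
proof -
  have "coprime (int n) u"
  proof (rule coprimeI)
    fix c assume "c dvd int n" "c dvd u"
    then have "c dvd int n * t - p * u"
      by (simp add: dvd_diff)
    then show "is_unit c"
      using inverse by simp
  qed
  then have nodes: "inj_on (\<lambda>j. cis (2 * pi * of_int u * of_nat j / of_nat n)) {..<d}"
    by (rule inj_on_subset[OF inj_on_roots_of_unity[OF assms(1)]]) (use \<open>d \<le> n\<close> in auto)
  have "mat d d (\<lambda>(j, k). chirp_coeff p n \<beta> (int j - int k))
      = mat d d (\<lambda>(j, k). (chirp_coeff p n \<beta> 0 * inverse (chirp_shift p n \<beta> (int j * u)))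
          * inverse (chirp_shift p n \<beta> (- int k * u)) * cis (2 * pi * of_int u * of_nat j / of_nat n) ^ k)"
    by (rule cong_mat) (simp_all add: chirp_coeff_toeplitz[OF assms(1-3)])
  also have "det \<dots> \<noteq> 0"
    by (rule det_scaled_vandermonde_nonzero[OF nodes])
      (simp_all add: chirp_coeff_0_nonzero[OF assms(1-3)] chirp_shift_def)
  finally show ?thesis .
qed

lemma reduced_fraction_coprime:
  assumes "Q \<ge> 1" and "coprime P Q"
  shows "red_p P Q = P" and "red_q P Q = Q"
proof -
  have "quotient_of (of_int P / of_int Q :: rat) = (P, Q)"
    using assms by (simp add: Fract_of_int_quotient[symmetric] quotient_of_Fract normalize_def)
  then show "red_p P Q = P" and "red_q P Q = Q"
    by (simp_all add: red_p_def red_q_def)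
qed

text \<open>\<open>P (2\<beta> + Q)\<close> is an even integer, which makes the chirp \<open>Q\<close>-periodic.\<close>
lemma beta_even:
  assumes "P \<noteq> 0"
  obtains z :: int where "of_int P * (2 * beta P Q \<nu> + of_int Q) = 2 * of_int z"
proof
  show "of_int P * (2 * beta P Q \<nu> + of_int Q)
      = 2 * of_int (\<nu> + P * Q - P * \<lfloor>of_int \<nu> / of_int P + of_int Q / 2 :: real\<rfloor>)"
    using assms unfolding beta_def frac_def by (simp add: field_simps)
qed

lemma coprime_negative_inverse:
  fixes P Q :: int
  assumes "coprime P Q"
  obtains u t where "P * u = Q * t - 1"
proof -
  obtain x y where "x * P + y * Q = 1"
    using bezout_int[of P Q] assms by (auto simp: coprime_iff_gcd_eq_1)
  then have "P * (- x) = Q * y - 1"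
    by (simp add: algebra_simps)
  then show ?thesis by (rule that)
qed

lemma G_entry_eq_chirp_coeff:
  assumes "Q \<ge> 1" and "coprime P Q"
  shows "G_entry P Q \<nu> (j + 1) (k + 1) = chirp_coeff P (nat Q) (beta P Q \<nu>) (int j - int k)"
proof -
  have Q: "Q = int (nat Q)"
    using assms(1) by simp
  have "exp (2 * pi * \<i> * of_nat s * (of_nat (j + 1) - of_nat (k + 1)) / of_int Q)
      = cis (2 * pi * of_nat s * of_int (int j - int k) / of_nat (nat Q))" for s
    unfolding cis_conv_exp by (subst Q) (simp add: mult_ac)
  moreover have "a_coef P Q \<nu> (s + 1) = chirp P (nat Q) (beta P Q \<nu>) (int s)" for s
    unfolding a_coef_def chirp_def cis_conv_exp reduced_fraction_coprime[OF assms]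
    by (subst Q) (simp add: mult_ac)
  ultimately show ?thesis
    unfolding G_entry_def fourier_coeff_def by (subst (2) Q) simp
qed

theorem lemma2:
  fixes P Q \<nu> :: int
  assumes "Q \<ge> 1" and "P \<noteq> 0" and "coprime P Q"
  shows "det (G_mat P Q \<nu> (nat ((Q + 1) div 2))) \<noteq> 0"
proof -
  define n where "n = nat Q"
  define d where "d = nat ((Q + 1) div 2)"
  have "n > 0" and Q: "Q = int n" and "d \<le> n"
    using assms(1) by (auto simp: n_def d_def)
  obtain z where "of_int P * (2 * beta P Q \<nu> + of_int Q) = 2 * of_int z"
    using beta_even[OF assms(2)] .
  then have even: "of_int P * (2 * beta P Q \<nu> + of_nat n) = 2 * of_int z"
    by (simp add: Q)
  obtain u t where "P * u = Q * t - 1"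
    using coprime_negative_inverse[OF assms(3)] .
  then have inverse: "P * u = int n * t - 1"
    by (simp add: Q)
  have "G_mat P Q \<nu> d = mat d d (\<lambda>(j, k). chirp_coeff P n (beta P Q \<nu>) (int j - int k))"
    unfolding G_mat_def n_def
    by (rule cong_mat) (simp_all add: G_entry_eq_chirp_coeff[OF assms(1,3), simplified])
  also have "det \<dots> \<noteq> 0"
    by (rule det_chirp_coeff_toeplitz_nonzero[OF \<open>n > 0\<close> even inverse \<open>d \<le> n\<close>])
  finally show ?thesis
    unfolding d_def .
qed

end
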